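(* Let $X$ have a pdf $f$ satisfying Conditions (A) and (B) below. Suppose $X$ is quantized by the uniform quantizer $Q_{\mathrm{uni}}^\delta$ and the cells are assigned the real-valued Shannon code. Let $L$ be the resulting random codeword length. Then $$\lim_{\delta\to0}\frac{E[L^2]}{(E[L])^2}=1.$$
   Context: Let $X$ be a real random variable with pdf $f$. Condition (A): $f$ is continuous and differentiable, and its support is a bounded interval $I$. Condition (B): $\int_I f\log_2^2 f\,dx$ and $-\int_I f\log_2 f\,dx$ exist and are finite. The uniform quantizer $Q_{\mathrm{uni}}^\delta$ partitions $I$ into consecutive cells of length $\delta$. Let $p_i$ be the probability that $X$ falls in cell $i$. The real-valued Shannon code assigns length $l_i=-\log_2 p_i$ to cell $i$, and $L=l_i$ when $X$ is in cell $i$. *)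

theory Defs
  imports "HOL-Probability.Probability"
begin

text \<open>Uniform quantizer on the support interval [a,b] with cell length d:
  cell k = [a + k d, a + (k+1) d) for k = 0 .. ceil((b-a)/d) - 2, and the last
  cell is [a + k d, b] for k = ceil((b-a)/d) - 1 (possibly shorter than d).\<close>
definition uq_cell :: "real \<Rightarrow> real \<Rightarrow> real \<Rightarrow> real \<Rightarrow> int" where
  "uq_cell a b d x = min \<lfloor>(x - a) / d\<rfloor> (\<lceil>(b - a) / d\<rceil> - 1)"

definition cell_prob :: "'a measure \<Rightarrow> ('a \<Rightarrow> real) \<Rightarrow> real \<Rightarrow> real \<Rightarrow> real \<Rightarrow> int \<Rightarrow> real" where
  "cell_prob M X a b d i = measure M {\<omega> \<in> space M. uq_cell a b d (X \<omega>) = i}"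

definition shannon_len :: "'a measure \<Rightarrow> ('a \<Rightarrow> real) \<Rightarrow> real \<Rightarrow> real \<Rightarrow> real \<Rightarrow> 'a \<Rightarrow> real" where
  "shannon_len M X a b d \<omega> = - log 2 (cell_prob M X a b d (uq_cell a b d (X \<omega>)))"

end

(* Write u = -log2 d. Every quantizer cell has probability at most C d, where C bounds the
   density, so E[L] >= u - log2 C tends to infinity. The variance of L is at most its second
   moment about u, which is the sum of p_i log2^2 (p_i / d); since g ln^2 g is bounded on (0,1],
   this is at most a constant times the total length of the cells plus log2^2 C. A diverging
   mean and a bounded variance give E[L^2] / E[L]^2 = 1 + Var L / E[L]^2 -> 1. *)

theory Submission
  imports Defs "HOL-Real_Asymp.Real_Asymp"
begin

lemma moment_ratio_tendsto_1:
  fixes m1 m2 :: "'a \<Rightarrow> real"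
  assumes mean: "filterlim m1 at_top F"
    and var: "eventually (\<lambda>x. \<bar>m2 x - (m1 x)\<^sup>2\<bar> \<le> B) F"
  shows "((\<lambda>x. m2 x / (m1 x)\<^sup>2) \<longlongrightarrow> 1) F"
proof -
  have "((\<lambda>x. inverse ((m1 x)\<^sup>2)) \<longlongrightarrow> 0) F"
    by (intro tendsto_inverse_0_at_top filterlim_pow_at_top mean) simp
  then have "((\<lambda>x. B * inverse ((m1 x)\<^sup>2)) \<longlongrightarrow> 0) F"
    by (rule tendsto_mult_right_zero)
  moreover have
    "eventually (\<lambda>x. norm ((m2 x - (m1 x)\<^sup>2) * inverse ((m1 x)\<^sup>2)) \<le> B * inverse ((m1 x)\<^sup>2)) F"
    using var by eventually_elim (simp add: abs_mult mult_right_mono)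
  ultimately have "((\<lambda>x. (m2 x - (m1 x)\<^sup>2) * inverse ((m1 x)\<^sup>2)) \<longlongrightarrow> 0) F"
    by (rule Lim_null_comparison[rotated])
  then have "((\<lambda>x. 1 + (m2 x - (m1 x)\<^sup>2) * inverse ((m1 x)\<^sup>2)) \<longlongrightarrow> 1) F"
    using tendsto_add[OF tendsto_const] by fastforce
  moreover have "eventually (\<lambda>x. 0 < m1 x) F"
    using mean by (simp add: filterlim_at_top_dense)
  then have "eventually (\<lambda>x. 1 + (m2 x - (m1 x)\<^sup>2) * inverse ((m1 x)\<^sup>2) = m2 x / (m1 x)\<^sup>2) F"
    by eventually_elim (auto simp: field_simps)
  ultimately show ?thesis
    by (rule Lim_transform_eventually)
qed

lemma weighted_sum_square_shift:
  fixes p l :: "'i \<Rightarrow> real"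
  assumes "sum p S = 1"
  shows "(\<Sum>i\<in>S. p i * (l i - u)\<^sup>2)
    = ((\<Sum>i\<in>S. p i * (l i)\<^sup>2) - (\<Sum>i\<in>S. p i * l i)\<^sup>2) + ((\<Sum>i\<in>S. p i * l i) - u)\<^sup>2"
proof -
  have "(\<Sum>i\<in>S. p i * (l i - u)\<^sup>2)
      = (\<Sum>i\<in>S. p i * (l i)\<^sup>2) - 2 * u * (\<Sum>i\<in>S. p i * l i) + u\<^sup>2 * sum p S"
    by (simp add: power2_diff algebra_simps sum.distrib sum_subtractf sum_distrib_left sum_distrib_right)
  then show ?thesis
    using assms by (simp add: power2_diff)
qed

lemma weighted_variance_bounds:
  fixes p l :: "'i \<Rightarrow> real"
  assumes "\<And>i. i \<in> S \<Longrightarrow> 0 \<le> p i" and "sum p S = 1"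
  shows "0 \<le> (\<Sum>i\<in>S. p i * (l i)\<^sup>2) - (\<Sum>i\<in>S. p i * l i)\<^sup>2"
    and "(\<Sum>i\<in>S. p i * (l i)\<^sup>2) - (\<Sum>i\<in>S. p i * l i)\<^sup>2 \<le> (\<Sum>i\<in>S. p i * (l i - u)\<^sup>2)"
proof -
  have "0 \<le> (\<Sum>i\<in>S. p i * (l i - (\<Sum>i\<in>S. p i * l i))\<^sup>2)"
    using assms(1) by (intro sum_nonneg) simp
  then show "0 \<le> (\<Sum>i\<in>S. p i * (l i)\<^sup>2) - (\<Sum>i\<in>S. p i * l i)\<^sup>2"
    by (simp add: weighted_sum_square_shift[OF assms(2)])
  show "(\<Sum>i\<in>S. p i * (l i)\<^sup>2) - (\<Sum>i\<in>S. p i * l i)\<^sup>2 \<le> (\<Sum>i\<in>S. p i * (l i - u)\<^sup>2)"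
    by (simp add: weighted_sum_square_shift[OF assms(2)])
qed

lemma mult_ln_squared_le_4:
  fixes g :: real
  assumes "0 < g" "g \<le> 1"
  shows "g * (ln g)\<^sup>2 \<le> 4"
proof -
  have "ln (1 / sqrt g) \<le> 1 / sqrt g - 1"
    using assms by (intro ln_le_minus_one) simp
  moreover have "ln (1 / sqrt g) = - ln g / 2"
    using assms by (simp add: ln_div ln_sqrt)
  ultimately have "- ln g \<le> 2 / sqrt g" by simp
  moreover have "0 \<le> - ln g" using assms by simp
  ultimately have "(- ln g)\<^sup>2 \<le> (2 / sqrt g)\<^sup>2" by (intro power_mono) auto
  then have "(ln g)\<^sup>2 \<le> 4 / g" using assms by (simp add: power_divide)
  then show ?thesis using assms by (simp add: field_simps mult.commute)
qed

lemma mult_log_ratio_squared_le: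
  fixes p d C :: real
  assumes "0 \<le> p" "p \<le> C * d" "0 < d"
  shows "p * (log 2 (p / d))\<^sup>2 \<le> 4 / (ln 2)\<^sup>2 * d + p * (log 2 C)\<^sup>2"
proof (cases "p = 0")
  case True
  then show ?thesis using assms by simp
next
  case False
  define g where "g = p / d"
  have "0 < g" using False assms unfolding g_def by simp
  have "0 \<le> 4 / (ln 2)\<^sup>2 * d" "0 \<le> p * (log 2 C)\<^sup>2"
    using assms by simp_all
  show ?thesis
  proof (cases "g \<le> 1")
    case True
    have "p * (log 2 (p / d))\<^sup>2 = (g * (ln g)\<^sup>2) / (ln 2)\<^sup>2 * d"
      using assms by (simp add: g_def log_def power_divide)
    also have "\<dots> \<le> 4 / (ln 2)\<^sup>2 * d"
      using mult_ln_squared_le_4[OF \<open>0 < g\<close> True] assms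
      by (intro divide_right_mono mult_right_mono) auto
    finally show ?thesis
      using \<open>0 \<le> p * (log 2 C)\<^sup>2\<close> by linarith
  next
    case False
    then have "g \<le> C" "1 < g"
      using assms unfolding g_def by (auto simp: divide_le_eq)
    then have "(log 2 g)\<^sup>2 \<le> (log 2 C)\<^sup>2"
      by (intro power_mono) auto
    then have "p * (log 2 (p / d))\<^sup>2 \<le> p * (log 2 C)\<^sup>2"
      using assms unfolding g_def by (intro mult_left_mono) auto
    then show ?thesis
      using \<open>0 \<le> 4 / (ln 2)\<^sup>2 * d\<close> by linarith
  qed
qed

lemma integral_comp_finite_valued:
  assumes "finite_measure M" and J: "J \<in> measurable M (count_space UNIV)"
    and "finite S" and "AE \<omega> in M. J \<omega> \<in> S"
  shows "(\<integral>\<omega>. h (J \<omega>) \<partial>M) = (\<Sum>i\<in>S. measure M {\<omega>\<in>space M. J \<omega> = i} * h i)"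
proof -
  interpret finite_measure M by fact
  have sets: "{\<omega>\<in>space M. J \<omega> = i} \<in> sets M" for i
    using J by measurable
  have "(\<integral>\<omega>. h (J \<omega>) \<partial>M) = (\<integral>\<omega>. (\<Sum>i\<in>S. indicator {\<omega>\<in>space M. J \<omega> = i} \<omega> * h i) \<partial>M)"
  proof (rule integral_cong_AE)
    show "(\<lambda>\<omega>. h (J \<omega>)) \<in> borel_measurable M"
      by (rule measurable_compose[OF J]) simp
    show "(\<lambda>\<omega>. \<Sum>i\<in>S. indicator {\<omega> \<in> space M. J \<omega> = i} \<omega> * h i) \<in> borel_measurable M"
      using sets by measurable
    show "AE \<omega> in M. h (J \<omega>) = (\<Sum>i\<in>S. indicator {\<omega> \<in> space M. J \<omega> = i} \<omega> * h i)"
      using AE_space assms(4)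
    proof eventually_elim
      case (elim \<omega>)
      then show ?case
        using \<open>finite S\<close> by (simp add: indicator_def if_distrib sum.delta cong: conj_cong)
    qed
  qed
  also have "\<dots> = (\<Sum>i\<in>S. measure M {\<omega>\<in>space M. J \<omega> = i} * h i)"
    using sets by (subst Bochner_Integration.integral_sum)
      (auto intro!: integrable_real_indicator simp: Int_absorb2 subset_iff less_top[symmetric])
  finally show ?thesis .
qed

lemma uq_cell_measurable: "uq_cell a b d \<in> measurable lborel (count_space UNIV)"
  unfolding uq_cell_def by measurable

lemma uq_cell_in_cells:
  assumes "a < b" "0 < d" "x \<in> {a..b}"
  shows "uq_cell a b d x \<in> {0..\<lceil>(b - a) / d\<rceil> - 1}"
  using assms by (auto simp: uq_cell_def)

lemma uq_cell_in_interval: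
  assumes "0 < d" "x \<in> {a..b}"
  shows "x \<in> {a + of_int (uq_cell a b d x) * d .. a + (of_int (uq_cell a b d x) + 1) * d}"
proof -
  define q where "q = (x - a) / d"
  have "q \<le> \<lceil>(b - a) / d\<rceil>"
    using assms unfolding q_def by (smt (verit) divide_right_mono atLeastAtMost_iff le_of_int_ceiling)
  then have "of_int (uq_cell a b d x) \<le> q \<and> q \<le> of_int (uq_cell a b d x) + 1"
    unfolding uq_cell_def q_def[symmetric] by linarith
  moreover have "x = a + q * d"
    using assms unfolding q_def by simp
  ultimately show ?thesis
    using assms by (auto intro: mult_right_mono)
qed

locale bounded_density_on_interval = prob_space M for M :: "'a measure" +
  fixes X :: "'a \<Rightarrow> real" and f :: "real \<Rightarrow> real" and a b C :: real
  assumes distributed: "distributed M lborel X (\<lambda>x. ennreal (f x))"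
    and a_less_b: "a < b"
    and support: "f x \<noteq> 0 \<Longrightarrow> x \<in> {a..b}"
    and f_le: "f x \<le> C"
    and C_pos: "0 < C"
begin

lemma X_measurable: "X \<in> measurable M lborel"
  and distr_X: "distr M lborel X = density lborel (\<lambda>x. ennreal (f x))"
  and f_measurable: "(\<lambda>x. ennreal (f x)) \<in> borel_measurable lborel"
  using distributed unfolding distributed_def by auto

lemma AE_X_in_support: "AE \<omega> in M. X \<omega> \<in> {a..b}"
proof (rule AE_distrD[OF X_measurable])
  show "AE x in distr M lborel X. x \<in> {a..b}"
    unfolding distr_X using support by (subst AE_density[OF f_measurable]) (auto intro!: AE_I2)
qed

lemma integral_shannon_len:
  assumes "0 < d"
  shows "(\<integral>\<omega>. h (shannon_len M X a b d \<omega>) \<partial>M)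
    = (\<Sum>i\<in>{0..\<lceil>(b - a) / d\<rceil> - 1}. cell_prob M X a b d i * h (- log 2 (cell_prob M X a b d i)))"
proof -
  have "AE \<omega> in M. uq_cell a b d (X \<omega>) \<in> {0..\<lceil>(b - a) / d\<rceil> - 1}"
    using AE_X_in_support by eventually_elim (rule uq_cell_in_cells[OF a_less_b assms])
  from integral_comp_finite_valued[OF finite_measure_axioms _ _ this]
  show ?thesis
    using measurable_compose[OF X_measurable uq_cell_measurable]
    by (simp add: shannon_len_def cell_prob_def)
qed

lemma sum_cell_prob:
  assumes "0 < d"
  shows "(\<Sum>i\<in>{0..\<lceil>(b - a) / d\<rceil> - 1}. cell_prob M X a b d i) = 1"
  using integral_shannon_len[OF assms, of "\<lambda>_. 1"] by (simp add: prob_space)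

lemma cell_prob_le:
  assumes "0 < d"
  shows "cell_prob M X a b d i \<le> C * d"
proof -
  define A where "A = {x. uq_cell a b d x = i}"
  define I where "I = {a + of_int i * d .. a + (of_int i + 1) * d}"
  have A: "A \<in> sets lborel"
    using measurable_sets[OF uq_cell_measurable, of "{i}"] by (simp add: A_def vimage_def)
  have "emeasure (density lborel (\<lambda>x. ennreal (f x))) A
      = (\<integral>\<^sup>+x. ennreal (f x) * indicator A x \<partial>lborel)"
    by (rule emeasure_density[OF f_measurable A])
  also have "\<dots> \<le> (\<integral>\<^sup>+x. ennreal C * indicator I x \<partial>lborel)"
  proof (rule nn_integral_mono)
    fix x
    have "f x = 0 \<or> (x \<in> A \<longrightarrow> x \<in> I)"
      using support uq_cell_in_interval[OF assms] unfolding A_def I_def by blast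
    then show "ennreal (f x) * indicator A x \<le> ennreal C * indicator I x"
      using f_le[of x] by (auto simp: indicator_def intro: ennreal_leI)
  qed
  also have "\<dots> = ennreal (C * d)"
    using assms C_pos by (simp add: I_def nn_integral_cmult_indicator ennreal_mult algebra_simps)
  finally have "measure (density lborel (\<lambda>x. ennreal (f x))) A \<le> C * d"
    unfolding measure_def using assms C_pos by (intro enn2real_leI) auto
  moreover have "cell_prob M X a b d i = measure (distr M lborel X) A"
    using A X_measurable
    by (simp add: measure_distr cell_prob_def A_def vimage_def Int_def conj_commute)
  ultimately show ?thesis
    by (simp add: distr_X)
qed

lemma expectation_shannon_len_ge:
  assumes "0 < d"
  shows "- log 2 d - log 2 C \<le> (\<integral>\<omega>. shannon_len M X a b d \<omega> \<partial>M)"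
proof -
  let ?p = "cell_prob M X a b d"
  have "- log 2 d - log 2 C = (\<Sum>i\<in>{0..\<lceil>(b - a) / d\<rceil> - 1}. ?p i) * (- log 2 (C * d))"
    using assms C_pos by (simp add: sum_cell_prob log_mult)
  also have "\<dots> = (\<Sum>i\<in>{0..\<lceil>(b - a) / d\<rceil> - 1}. ?p i * (- log 2 (C * d)))"
    by (rule sum_distrib_right)
  also have "\<dots> \<le> (\<Sum>i\<in>{0..\<lceil>(b - a) / d\<rceil> - 1}. ?p i * (- log 2 (?p i)))"
  proof (rule sum_mono)
    fix i
    show "?p i * (- log 2 (C * d)) \<le> ?p i * (- log 2 (?p i))"
    proof (cases "?p i = 0")
      case False
      then have "0 < ?p i"
        by (simp add: cell_prob_def order.strict_iff_order)
      then have "log 2 (?p i) \<le> log 2 (C * d)"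
        using cell_prob_le[OF assms, of i] by simp
      then show ?thesis
        using \<open>0 < ?p i\<close> by (simp add: mult_left_mono)
    qed simp
  qed
  also have "\<dots> = (\<integral>\<omega>. shannon_len M X a b d \<omega> \<partial>M)"
    using integral_shannon_len[OF assms, of "\<lambda>t. t"] by simp
  finally show ?thesis .
qed

lemma card_cells_mult_le:
  assumes "0 < d"
  shows "real (card {0..\<lceil>(b - a) / d\<rceil> - 1}) * d \<le> b - a + d"
proof -
  have "of_int \<lceil>(b - a) / d\<rceil> * d \<le> ((b - a) / d + 1) * d"
    using assms by (intro mult_right_mono) linarith+
  also have "\<dots> = b - a + d"
    using assms by (simp add: field_simps)
  finally show ?thesis
    using a_less_b assms by simp
qed

lemma variance_shannon_len_bounds:
  assumes d: "0 < d"
  defines "EL \<equiv> \<integral>\<omega>. shannon_len M X a b d \<omega> \<partial>M"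
    and "EL2 \<equiv> \<integral>\<omega>. (shannon_len M X a b d \<omega>)\<^sup>2 \<partial>M"
  shows "0 \<le> EL2 - EL\<^sup>2" and "EL2 - EL\<^sup>2 \<le> 4 / (ln 2)\<^sup>2 * (b - a + d) + (log 2 C)\<^sup>2"
proof -
  let ?S = "{0..\<lceil>(b - a) / d\<rceil> - 1}"
  let ?p = "cell_prob M X a b d"
  let ?l = "\<lambda>i. - log 2 (?p i)"
  have nonneg: "0 \<le> ?p i" for i
    by (simp add: cell_prob_def)
  have EL: "EL = (\<Sum>i\<in>?S. ?p i * ?l i)" and EL2: "EL2 = (\<Sum>i\<in>?S. ?p i * (?l i)\<^sup>2)"
    unfolding EL_def EL2_def
    using integral_shannon_len[OF d, of "\<lambda>t. t"] integral_shannon_len[OF d, of "\<lambda>t. t\<^sup>2"] by simp_all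
  note bounds = weighted_variance_bounds[of ?S ?p, OF nonneg sum_cell_prob[OF d]]
  show "0 \<le> EL2 - EL\<^sup>2"
    unfolding EL EL2 by (rule bounds(1))
  have "EL2 - EL\<^sup>2 \<le> (\<Sum>i\<in>?S. ?p i * (?l i - (- log 2 d))\<^sup>2)"
    unfolding EL EL2 by (rule bounds(2))
  also have "\<dots> = (\<Sum>i\<in>?S. ?p i * (log 2 (?p i / d))\<^sup>2)"
  proof (rule sum.cong)
    fix i
    show "?p i * (?l i - (- log 2 d))\<^sup>2 = ?p i * (log 2 (?p i / d))\<^sup>2"
      using nonneg[of i] d by (cases "?p i = 0") (simp_all add: log_divide power2_commute)
  qed simp
  also have "\<dots> \<le> (\<Sum>i\<in>?S. 4 / (ln 2)\<^sup>2 * d + ?p i * (log 2 C)\<^sup>2)"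
    using nonneg cell_prob_le[OF d] d by (intro sum_mono mult_log_ratio_squared_le)
  also have "\<dots> = 4 / (ln 2)\<^sup>2 * (real (card ?S) * d) + (log 2 C)\<^sup>2"
    using sum_cell_prob[OF d] by (simp add: sum.distrib flip: sum_distrib_right)
  also have "\<dots> \<le> 4 / (ln 2)\<^sup>2 * (b - a + d) + (log 2 C)\<^sup>2"
    using card_cells_mult_le[OF d] by (simp add: divide_right_mono)
  finally show "EL2 - EL\<^sup>2 \<le> 4 / (ln 2)\<^sup>2 * (b - a + d) + (log 2 C)\<^sup>2" .
qed

end

theorem proposition1:
  fixes M :: "'a measure" and X :: "'a \<Rightarrow> real" and f :: "real \<Rightarrow> real" and a b :: real
  assumes "prob_space M"
    and "distributed M lborel X (\<lambda>x. ennreal (f x))"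
    and "\<forall>x. 0 \<le> f x"
    and "a < b"
    and "closure {x. f x \<noteq> 0} = {a..b}"
    and "continuous_on {a..b} f"
    and "\<forall>x\<in>{a..b}. f differentiable (at x within {a..b})"
    and "set_integrable lborel {a..b} (\<lambda>x. f x * (log 2 (f x))\<^sup>2)"
    and "set_integrable lborel {a..b} (\<lambda>x. f x * log 2 (f x))"
  shows "((\<lambda>d. (\<integral>\<omega>. (shannon_len M X a b d \<omega>)\<^sup>2 \<partial>M) / (\<integral>\<omega>. shannon_len M X a b d \<omega> \<partial>M)\<^sup>2)
           \<longlongrightarrow> 1) (at_right 0)"
proof -
  have support: "f x \<noteq> 0 \<Longrightarrow> x \<in> {a..b}" for x
    using closure_subset[of "{x. f x \<noteq> 0}"] unfolding assms(5) by blast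
  have "bounded (f ` {a..b})"
    using assms(6) by (intro compact_imp_bounded compact_continuous_image) auto
  then obtain C where "0 < C" and C: "\<forall>x\<in>{a..b}. \<bar>f x\<bar> \<le> C"
    by (auto simp: bounded_pos)
  have f_le: "f x \<le> C" for x
    using support[of x] C \<open>0 < C\<close> by (cases "f x = 0") (auto dest: abs_le_D1)
  interpret bounded_density_on_interval M X f a b C
    by (intro bounded_density_on_interval.intro bounded_density_on_interval_axioms.intro
        assms(1,2,4) support f_le \<open>0 < C\<close>)
  let ?EL = "\<lambda>d. \<integral>\<omega>. shannon_len M X a b d \<omega> \<partial>M"
  let ?EL2 = "\<lambda>d. \<integral>\<omega>. (shannon_len M X a b d \<omega>)\<^sup>2 \<partial>M"
  have "filterlim (\<lambda>d::real. - log 2 d - log 2 C) at_top (at_right 0)"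
    by real_asymp
  moreover have "eventually (\<lambda>d. - log 2 d - log 2 C \<le> ?EL d) (at_right 0)"
    using eventually_at_right_less[of "0::real"] by eventually_elim (rule expectation_shannon_len_ge)
  ultimately have "filterlim ?EL at_top (at_right 0)"
    by (rule filterlim_at_top_mono)
  moreover have "eventually
      (\<lambda>d. \<bar>?EL2 d - (?EL d)\<^sup>2\<bar> \<le> 4 / (ln 2)\<^sup>2 * (b - a + 1) + (log 2 C)\<^sup>2) (at_right 0)"
    using eventually_at_right_real[OF zero_less_one]
  proof eventually_elim
    case (elim d)
    then have "4 / (ln 2)\<^sup>2 * (b - a + d) \<le> 4 / (ln 2)\<^sup>2 * (b - a + 1)"
      by (intro mult_left_mono) auto
    with elim show ?case
      using variance_shannon_len_bounds[of d] by (simp add: abs_le_iff)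
  qed
  ultimately show ?thesis
    by (rule moment_ratio_tendsto_1)
qed

end
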